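(* Let $n,k,r,\ell$ be positive integers. Then \[S_{\geq \ell}(n,k,r)=\sum_{i=\ell-1}^{n-1}\binom{n-1}{i}\Big((k-1)\,S_{\geq \ell}(n-i-1,k-1,r)+S_{\geq \ell}(n-i-1,k,r-1)\Big),\] where the term $(k-1)S_{\geq \ell}(n-i-1,k-1,r)$ is $0$ when $k=1$.
   Context: For integers $N\ge 0$, $k\ge1$, $r\ge 0$, $\ell\ge1$, $S_{\geq \ell}(N,k,r)$ is the number of ways to partition $[N]=\{1,\dots,N\}$ into $r+k-1$ non-empty blocks, each of size at least $\ell$, where $r$ of the blocks receive the label $1$ (blocks with label $1$ are indistinguishable among themselves) and the remaining $k-1$ blocks receive the distinct labels $2,3,\dots,k$. (In particular $S_{\geq\ell}(0,1,0)=1$.) *)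

theory Defs
  imports Main "HOL-Library.Disjoint_Sets" "HOL-Library.FuncSet"
begin

text \<open>S_geq l N k r: number of pairs (P, f) where P is a set partition of {1..N}
  into non-empty blocks of size at least l, and f labels the blocks with labels in
  {1..k} such that exactly r blocks get label 1 (these are thus indistinguishable)
  and each label j in {2..k} is used on exactly one block.\<close>
definition S_geq :: "nat \<Rightarrow> nat \<Rightarrow> nat \<Rightarrow> nat \<Rightarrow> nat" where
  "S_geq l N k r = card {(P, f). partition_on {1..N} P \<and> (\<forall>B\<in>P. l \<le> card B)
      \<and> f \<in> P \<rightarrow>\<^sub>E {1..k}
      \<and> card {B\<in>P. f B = 1} = r
      \<and> (\<forall>j\<in>{2..k}. card {B\<in>P. f B = j} = 1)}"

end

theory Submission
  imports Defs
begin

(*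
  Fix an element a of the ground set. A labelled partition is determined by the block B
  containing a, the label of B, and the labelled partition of the remaining elements. If B
  carries one of the k - 1 distinct labels, the rest is a labelled partition with that label
  deleted and still r blocks labelled 1; if B is labelled 1, the rest has r - 1 such blocks.
  There are (n-1 choose i) blocks B containing a with |B| = i + 1. For the rest to be counted
  by S_geq again, the count must depend only on the number of elements and of distinct labels;
  this follows by strong induction on the number of elements, since a set A and {1..|A|}
  satisfy the same recursion.
*)

(* The set counted by S_geq, for an arbitrary ground set A and set K of distinct labels
   (with 1 \<notin> K), so that it is closed under deleting a block. *)
definition labelled_partitions ::
    "nat \<Rightarrow> 'a set \<Rightarrow> nat set \<Rightarrow> nat \<Rightarrow> ('a set set \<times> ('a set \<Rightarrow> nat)) set" where
  "labelled_partitions l A K r = {(P, f). partition_on A P \<and> (\<forall>B\<in>P. l \<le> card B)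
      \<and> f \<in> P \<rightarrow>\<^sub>E insert 1 K
      \<and> card {B\<in>P. f B = 1} = r
      \<and> (\<forall>j\<in>K. card {B\<in>P. f B = j} = 1)}"

lemma S_geq_eq_card_labelled_partitions:
  "S_geq l N (Suc m) r = card (labelled_partitions l {1..N} {2..Suc m} r)"
proof -
  have "insert 1 {2..Suc m} = {1..Suc m}" by auto
  then show ?thesis unfolding S_geq_def labelled_partitions_def by simp
qed

lemma finite_labelled_partitions:
  assumes "finite A" "finite K"
  shows "finite (labelled_partitions l A K r)"
proof (rule finite_subset)
  show "labelled_partitions l A K r \<subseteq> Sigma {P. partition_on A P} (\<lambda>P. P \<rightarrow>\<^sub>E insert 1 K)"
    by (auto simp: labelled_partitions_def)
  show "finite (Sigma {P. partition_on A P} (\<lambda>P. P \<rightarrow>\<^sub>E insert 1 K))"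
    using assms by (intro finite_SigmaI finite_PiE finitely_many_partition_on)
      (auto intro: finite_elements)
qed

lemma labelled_partitions_empty:
  "labelled_partitions l {} K r = (if K = {} \<and> r = 0 then {({}, \<lambda>_. undefined)} else {})"
  by (auto simp: labelled_partitions_def partition_on_empty)

lemma card_Collect_insert:
  assumes "finite Q" "B \<notin> Q"
  shows "card {C \<in> insert B Q. p C} = card {C \<in> Q. p C} + (if p B then 1 else 0)"
proof -
  have "{C \<in> insert B Q. p C} = (if p B then insert B {C \<in> Q. p C} else {C \<in> Q. p C})"
    by auto
  then show ?thesis using assms by simp
qed

lemma remove_block_in_labelled_partitions:
  assumes PF: "(P, f) \<in> labelled_partitions l A K r" and "B \<in> P" "finite A" "1 \<notin> K"
  shows "(P - {B}, restrict f (P - {B}))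
    \<in> labelled_partitions l (A - B) (K - {f B}) (if f B = 1 then r - 1 else r)"
proof -
  let ?Q = "P - {B}"
  have P: "partition_on A P" "\<forall>C\<in>P. l \<le> card C" "f \<in> P \<rightarrow>\<^sub>E insert 1 K"
    "card {C\<in>P. f C = 1} = r" "\<forall>j\<in>K. card {C\<in>P. f C = j} = 1"
    using PF by (auto simp: labelled_partitions_def)
  have "finite ?Q" "B \<notin> ?Q" "insert B ?Q = P"
    using finite_elements[OF \<open>finite A\<close> P(1)] \<open>B \<in> P\<close> by auto
  then have count: "card {C\<in>P. f C = x} = card {C\<in>?Q. f C = x} + (if f B = x then 1 else 0)" for x
    using card_Collect_insert[of ?Q B "\<lambda>C. f C = x"] by simp
  have "disjnt B (\<Union>?Q)"
    using partition_onD2[OF P(1)] \<open>B \<in> P\<close> by (auto simp: disjoint_def disjnt_def)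
  then have part: "partition_on (A - B) ?Q"
    using partition_on_insert[of B ?Q A] P(1) \<open>insert B ?Q = P\<close> by simp
  have "{C\<in>?Q. f C = f B} = {}" if "f B \<in> K"
    using count[of "f B"] P(5) that \<open>finite ?Q\<close> by simp
  then have "f C \<in> insert 1 (K - {f B})" if "C \<in> ?Q" for C
    using PiE_mem[OF P(3), of C] that by auto
  then have "restrict f ?Q \<in> ?Q \<rightarrow>\<^sub>E insert 1 (K - {f B})"
    by auto
  moreover have "card {C\<in>?Q. f C = 1} = (if f B = 1 then r - 1 else r)"
    using count[of 1] P(4) by auto
  moreover have "card {C\<in>?Q. f C = j} = 1" if "j \<in> K - {f B}" for j
    using count[of j] P(5) that by auto
  moreover have "{C\<in>?Q. restrict f ?Q C = x} = {C\<in>?Q. f C = x}" for x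
    by auto
  ultimately show ?thesis
    using part P(2) unfolding labelled_partitions_def mem_Collect_eq prod.case by auto
qed

lemma insert_block_in_labelled_partitions:
  assumes QG: "(Q, g) \<in> labelled_partitions l (A - B) (K - {j}) r"
    and B: "B \<subseteq> A" "B \<noteq> {}" "l \<le> card B" and "j \<in> insert 1 K" "finite A" "1 \<notin> K"
  shows "(insert B Q, g(B := j)) \<in> labelled_partitions l A K (if j = 1 then Suc r else r)"
proof -
  have Q: "partition_on (A - B) Q" "\<forall>C\<in>Q. l \<le> card C" "g \<in> Q \<rightarrow>\<^sub>E insert 1 (K - {j})"
    "card {C\<in>Q. g C = 1} = r" "\<forall>i\<in>K - {j}. card {C\<in>Q. g C = i} = 1"
    using QG by (auto simp: labelled_partitions_def)
  have "disjnt B (\<Union>Q)"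
    using partition_onD1[OF Q(1)] by (auto simp: disjnt_def)
  then have part: "partition_on A (insert B Q)"
    using partition_on_insert[of B Q A] Q(1) B by simp
  have "finite Q"
    using finite_elements[of "A - B" Q] Q(1) \<open>finite A\<close> by simp
  have "B \<notin> Q"
    using partition_onD1[OF Q(1)] B by auto
  have "{C\<in>Q. (g(B := j)) C = x} = {C\<in>Q. g C = x}" for x
    using \<open>B \<notin> Q\<close> by auto
  then have count: "card {C\<in>insert B Q. (g(B := j)) C = x} = card {C\<in>Q. g C = x} + (if j = x then 1 else 0)" for x
    using card_Collect_insert[OF \<open>finite Q\<close> \<open>B \<notin> Q\<close>, of "\<lambda>C. (g(B := j)) C = x"] by simp
  have "g(B := j) \<in> insert B Q \<rightarrow>\<^sub>E insert 1 K"
    using Q(3) \<open>B \<notin> Q\<close> \<open>j \<in> insert 1 K\<close> by (auto simp: PiE_def Pi_def extensional_def)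
  moreover have "card {C\<in>insert B Q. (g(B := j)) C = 1} = (if j = 1 then Suc r else r)"
    using count[of 1] Q(4) by auto
  moreover have "card {C\<in>insert B Q. (g(B := j)) C = i} = 1" if "i \<in> K" for i
  proof (cases "i = j")
    case True
    have "g C \<noteq> j" if "C \<in> Q" for C
      using PiE_mem[OF Q(3) that] \<open>i \<in> K\<close> \<open>1 \<notin> K\<close> True by auto
    then have no_j: "{C\<in>Q. g C = j} = {}"
      by blast
    show ?thesis
      unfolding True count no_j by simp
  qed (use count[of i] Q(5) that in auto)
  ultimately show ?thesis
    using part Q(2) B(3) by (auto simp: labelled_partitions_def)
qed

lemma bij_betw_remove_block:
  assumes "finite A" "1 \<notin> K" "B \<subseteq> A" "B \<noteq> {}" "l \<le> card B" "j \<in> insert 1 K"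
    and r: "j = 1 \<Longrightarrow> r \<noteq> 0"
  shows "bij_betw (\<lambda>(P, f). (P - {B}, restrict f (P - {B})))
    {x \<in> labelled_partitions l A K r. B \<in> fst x \<and> snd x B = j}
    (labelled_partitions l (A - B) (K - {j}) (if j = 1 then r - 1 else r))"
    (is "bij_betw ?remove ?X ?Y")
proof (rule bij_betw_byWitness)
  let ?insert = "\<lambda>(Q, g). (insert B Q, g(B := j))"
  show "\<forall>x\<in>?X. ?insert (?remove x) = x"
    by (auto simp: labelled_partitions_def fun_eq_iff PiE_def extensional_def)
  show "\<forall>y\<in>?Y. ?remove (?insert y) = y"
  proof
    fix y assume "y \<in> ?Y"
    moreover obtain Q g where "y = (Q, g)"
      by fastforce
    ultimately have "partition_on (A - B) Q" "g \<in> extensional Q"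
      by (auto simp: labelled_partitions_def PiE_def)
    moreover from this have "B \<notin> Q"
      using \<open>B \<noteq> {}\<close> by (auto dest: partition_onD1)
    ultimately show "?remove (?insert y) = y"
      using \<open>y = (Q, g)\<close> by (auto simp: fun_eq_iff extensional_def)
  qed
  show "?remove ` ?X \<subseteq> ?Y"
  proof
    fix y assume "y \<in> ?remove ` ?X"
    then obtain P f where "(P, f) \<in> labelled_partitions l A K r" "B \<in> P" "f B = j"
      and "y = ?remove (P, f)"
      by auto
    then show "y \<in> ?Y"
      using remove_block_in_labelled_partitions[of P f l A K r B] assms(1,2) by simp
  qed
  show "?insert ` ?Y \<subseteq> ?X"
  proof
    fix x assume "x \<in> ?insert ` ?Y"
    then obtain Q g where "(Q, g) \<in> ?Y" and "x = ?insert (Q, g)"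
      by auto
    then show "x \<in> ?X"
      using insert_block_in_labelled_partitions[OF _ assms(3-6,1-2), of Q g "if j = 1 then r - 1 else r"] r
      by (cases "j = 1") auto
  qed
qed

lemma card_eq_sum_card_unique_index:
  assumes "finite I" "finite X" "\<And>x. x \<in> X \<Longrightarrow> \<exists>!i. i \<in> I \<and> R i x"
  shows "card X = (\<Sum>i\<in>I. card {x \<in> X. R i x})"
proof -
  have "X = (\<Union>i\<in>I. {x \<in> X. R i x})"
    using assms(3) by blast
  also have "card \<dots> = (\<Sum>i\<in>I. card {x \<in> X. R i x})"
    using assms by (intro card_UN_disjoint) auto
  finally show ?thesis .
qed

lemma partition_on_ex1_block:
  assumes "partition_on A P" "a \<in> A"
  shows "\<exists>!B. B \<in> P \<and> a \<in> B"
proof -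
  obtain B where "B \<in> P" "a \<in> B"
    using partition_onD1[OF assms(1)] assms(2) by auto
  moreover have "C = B" if "C \<in> P" "a \<in> C" for C
    using partition_onD2[OF assms(1)] that \<open>B \<in> P\<close> \<open>a \<in> B\<close> by (auto dest: disjointD)
  ultimately show ?thesis
    by blast
qed

lemma labelled_partitions_label_one_pos:
  assumes "(P, f) \<in> labelled_partitions l A K r" "finite A" "B \<in> P" "f B = 1"
  shows "r \<noteq> 0"
proof -
  have "finite P" "card {C\<in>P. f C = 1} = r"
    using assms(1) finite_elements[OF assms(2)] by (auto simp: labelled_partitions_def)
  then show ?thesis
    using assms(3,4) by (auto simp: card_gt_0_iff)
qed

lemma sum_card_block_fibers:
  assumes "finite A" "finite K" "1 \<notin> K" "B \<subseteq> A" "B \<noteq> {}" "l \<le> card B"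
  shows "(\<Sum>j\<in>insert 1 K. card {x \<in> labelled_partitions l A K r. B \<in> fst x \<and> snd x B = j}) =
    (\<Sum>j\<in>K. card (labelled_partitions l (A - B) (K - {j}) r))
    + (if r = 0 then 0 else card (labelled_partitions l (A - B) K (r - 1)))"
proof -
  let ?fiber = "\<lambda>j. {x \<in> labelled_partitions l A K r. B \<in> fst x \<and> snd x B = j}"
  have "card (?fiber j) = card (labelled_partitions l (A - B) (K - {j}) r)" if "j \<in> K" for j
  proof -
    have "j \<noteq> 1"
      using that assms(3) by auto
    then show ?thesis
      using bij_betw_same_card[OF bij_betw_remove_block[OF assms(1,3-6), of j r]] that by simp
  qed
  moreover have "card (?fiber 1) = (if r = 0 then 0 else card (labelled_partitions l (A - B) K (r - 1)))"
  proof (cases "r = 0")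
    case True
    then have no_fiber: "?fiber 1 = {}"
      using labelled_partitions_label_one_pos[OF _ \<open>finite A\<close>] by fastforce
    show ?thesis
      unfolding no_fiber using True by simp
  next
    case False
    then show ?thesis
      using bij_betw_same_card[OF bij_betw_remove_block[OF assms(1,3-6), of 1 r]] assms(3) by auto
  qed
  ultimately show ?thesis
    using assms(2,3) by simp
qed

lemma card_labelled_partitions_by_block:
  assumes "finite A" "finite K" "1 \<notin> K" "a \<in> A"
  shows "card (labelled_partitions l A K r) =
    (\<Sum>B | B \<subseteq> A \<and> a \<in> B \<and> l \<le> card B.
       (\<Sum>j\<in>K. card (labelled_partitions l (A - B) (K - {j}) r))
       + (if r = 0 then 0 else card (labelled_partitions l (A - B) K (r - 1))))"
proof -
  define Bs where "Bs = {B. B \<subseteq> A \<and> a \<in> B \<and> l \<le> card B}"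
  have "finite Bs"
    using \<open>finite A\<close> unfolding Bs_def by (auto intro: finite_subset[of _ "Pow A"])
  have "\<exists>!i. i \<in> Bs \<times> insert 1 K \<and> fst i \<in> P \<and> f (fst i) = snd i"
    if "(P, f) \<in> labelled_partitions l A K r" for P f
  proof -
    have P: "partition_on A P" "\<forall>C\<in>P. l \<le> card C" "f \<in> P \<rightarrow>\<^sub>E insert 1 K"
      using that by (auto simp: labelled_partitions_def)
    obtain B where "B \<in> P" "a \<in> B" and unique: "\<And>C. C \<in> P \<Longrightarrow> a \<in> C \<Longrightarrow> C = B"
      using partition_on_ex1_block[OF P(1) \<open>a \<in> A\<close>] by blast
    show ?thesis
    proof (rule ex1I[of _ "(B, f B)"])
      show "(B, f B) \<in> Bs \<times> insert 1 K \<and> fst (B, f B) \<in> P \<and> f (fst (B, f B)) = snd (B, f B)"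
        using P partition_onD1[OF P(1)] \<open>B \<in> P\<close> \<open>a \<in> B\<close> unfolding Bs_def
        by (auto dest: PiE_mem)
      show "i = (B, f B)" if "i \<in> Bs \<times> insert 1 K \<and> fst i \<in> P \<and> f (fst i) = snd i" for i
        using that unique[of "fst i"] unfolding Bs_def by (cases i) auto
    qed
  qed
  then have "card (labelled_partitions l A K r) = (\<Sum>(B, j)\<in>Bs \<times> insert 1 K.
      card {x \<in> labelled_partitions l A K r. B \<in> fst x \<and> snd x B = j})"
    using \<open>finite Bs\<close> \<open>finite K\<close> finite_labelled_partitions[OF \<open>finite A\<close> \<open>finite K\<close>]
    by (subst card_eq_sum_card_unique_index[where R = "\<lambda>i x. fst i \<in> fst x \<and> snd x (fst i) = snd i"])
      (auto simp: case_prod_beta)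
  also have "\<dots> = (\<Sum>B\<in>Bs. \<Sum>j\<in>insert 1 K.
      card {x \<in> labelled_partitions l A K r. B \<in> fst x \<and> snd x B = j})"
    by (simp add: sum.cartesian_product)
  also have "\<dots> = (\<Sum>B\<in>Bs. (\<Sum>j\<in>K. card (labelled_partitions l (A - B) (K - {j}) r))
       + (if r = 0 then 0 else card (labelled_partitions l (A - B) K (r - 1))))"
    by (intro sum.cong refl sum_card_block_fibers[OF assms(1-3)]) (auto simp: Bs_def)
  finally show ?thesis
    unfolding Bs_def .
qed

lemma sum_subsets_by_card:
  fixes h :: "nat \<Rightarrow> 'b::comm_semiring_1"
  assumes "finite S"
  shows "(\<Sum>D | D \<subseteq> S \<and> m \<le> card D. h (card D)) = (\<Sum>i=m..card S. of_nat (card S choose i) * h i)"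
proof -
  have "(\<Sum>D | D \<subseteq> S \<and> m \<le> card D. h (card D))
      = (\<Sum>i=m..card S. \<Sum>D | D \<in> {D. D \<subseteq> S \<and> m \<le> card D} \<and> card D = i. h (card D))"
    using assms by (intro sum.group[symmetric]) (auto intro: card_mono)
  also have "\<dots> = (\<Sum>i=m..card S. of_nat (card S choose i) * h i)"
  proof (intro sum.cong refl)
    fix i assume "i \<in> {m..card S}"
    then have "{D. D \<in> {D. D \<subseteq> S \<and> m \<le> card D} \<and> card D = i} = {D. D \<subseteq> S \<and> card D = i}"
      by auto
    then show "(\<Sum>D | D \<in> {D. D \<subseteq> S \<and> m \<le> card D} \<and> card D = i. h (card D))
        = of_nat (card S choose i) * h i"
      using n_subsets[OF assms, of i] by simp
  qed
  finally show ?thesis .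
qed

lemma sum_subsets_containing_by_card:
  fixes h :: "nat \<Rightarrow> 'b::comm_semiring_1"
  assumes "finite A" "a \<in> A" "card A = Suc n"
  shows "(\<Sum>B | B \<subseteq> A \<and> a \<in> B \<and> l \<le> card B. h (card B))
    = (\<Sum>i=l-1..n. of_nat (n choose i) * h (Suc i))"
proof -
  have "(\<Sum>B | B \<subseteq> A \<and> a \<in> B \<and> l \<le> card B. h (card B))
      = (\<Sum>D | D \<subseteq> A - {a} \<and> l - 1 \<le> card D. h (Suc (card D)))"
  proof (rule sum.reindex_bij_witness[where i = "insert a" and j = "\<lambda>B. B - {a}"])
    fix B assume "B \<in> {B. B \<subseteq> A \<and> a \<in> B \<and> l \<le> card B}"
    moreover from this have "finite B"
      using \<open>finite A\<close> finite_subset by blast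
    moreover from calculation have "card B = Suc (card (B - {a}))"
      by (simp add: card_Suc_Diff1 del: card_Diff_insert)
    ultimately show "insert a (B - {a}) = B" "B - {a} \<in> {D. D \<subseteq> A - {a} \<and> l - 1 \<le> card D}"
      "h (Suc (card (B - {a}))) = h (card B)"
      by (auto simp del: card_Diff_insert)
  next
    fix D assume "D \<in> {D. D \<subseteq> A - {a} \<and> l - 1 \<le> card D}"
    moreover from this have "finite D" "a \<notin> D"
      using \<open>finite A\<close> finite_subset by auto
    ultimately show "insert a D - {a} = D" "insert a D \<in> {B. B \<subseteq> A \<and> a \<in> B \<and> l \<le> card B}"
      using \<open>a \<in> A\<close> by auto
  qed
  also have "\<dots> = (\<Sum>i=l-1..n. of_nat (n choose i) * h (Suc i))"
    using sum_subsets_by_card[of "A - {a}" "\<lambda>i. h (Suc i)" "l - 1"] assms by simp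
  finally show ?thesis .
qed

lemma card_labelled_partitions_recurrence:
  assumes "finite A" "finite K" "1 \<notin> K" "card A = Suc n"
    and smaller: "\<And>A' K' r'. A' \<subset> A \<Longrightarrow> finite K' \<Longrightarrow> 1 \<notin> K' \<Longrightarrow>
      card (labelled_partitions l A' K' r') = S_geq l (card A') (Suc (card K')) r'"
  shows "card (labelled_partitions l A K r) = (\<Sum>i=l-1..n. (n choose i) *
    (card K * S_geq l (n - i) (card K) r + (if r = 0 then 0 else S_geq l (n - i) (Suc (card K)) (r - 1))))"
proof -
  obtain a where "a \<in> A"
    using \<open>card A = Suc n\<close> card_eq_SucD by blast
  define h where "h s = card K * S_geq l (Suc n - s) (card K) r
    + (if r = 0 then 0 else S_geq l (Suc n - s) (Suc (card K)) (r - 1))" for s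
  have "card (labelled_partitions l A K r) =
    (\<Sum>B | B \<subseteq> A \<and> a \<in> B \<and> l \<le> card B.
       (\<Sum>j\<in>K. card (labelled_partitions l (A - B) (K - {j}) r))
       + (if r = 0 then 0 else card (labelled_partitions l (A - B) K (r - 1))))"
    using card_labelled_partitions_by_block[OF assms(1-3) \<open>a \<in> A\<close>] .
  also have "\<dots> = (\<Sum>B | B \<subseteq> A \<and> a \<in> B \<and> l \<le> card B. h (card B))"
  proof (intro sum.cong refl)
    fix B assume "B \<in> {B. B \<subseteq> A \<and> a \<in> B \<and> l \<le> card B}"
    then have "A - B \<subset> A" "card (A - B) = Suc n - card B"
      using \<open>finite A\<close> \<open>card A = Suc n\<close> by (auto simp: card_Diff_subset finite_subset)
    moreover have "Suc (card (K - {j})) = card K" if "j \<in> K" for j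
      using that \<open>finite K\<close> by (metis card_Suc_Diff1)
    ultimately show "(\<Sum>j\<in>K. card (labelled_partitions l (A - B) (K - {j}) r))
       + (if r = 0 then 0 else card (labelled_partitions l (A - B) K (r - 1))) = h (card B)"
      using smaller \<open>finite K\<close> \<open>1 \<notin> K\<close> unfolding h_def by simp
  qed
  also have "\<dots> = (\<Sum>i=l-1..n. (n choose i) * h (Suc i))"
    using sum_subsets_containing_by_card[OF assms(1) \<open>a \<in> A\<close> assms(4), of h l] by simp
  finally show ?thesis
    unfolding h_def diff_Suc_Suc by simp
qed

(* Only for sets of naturals: the induction hypothesis must apply to the subsets of A and of
   {1..|A|} alike. *)
lemma card_labelled_partitions:
  fixes A :: "nat set"
  assumes "finite A" "finite K" "1 \<notin> K"
  shows "card (labelled_partitions l A K r) = S_geq l (card A) (Suc (card K)) r"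
  using assms
proof (induction "card A" arbitrary: A K r rule: less_induct)
  case less
  show ?case
  proof (cases "card A")
    case 0
    then have "A = {}"
      using less.prems by simp
    moreover have "{2..Suc (card K)} = {} \<longleftrightarrow> K = {}"
      using less.prems by (auto simp: card_gt_0_iff Suc_le_eq)
    ultimately show ?thesis
      by (simp add: S_geq_eq_card_labelled_partitions labelled_partitions_empty)
  next
    case (Suc n)
    have smaller: "card (labelled_partitions l A' K' r') = S_geq l (card A') (Suc (card K')) r'"
      if "A' \<subset> B" "finite B" "card B = card A" "finite K'" "1 \<notin> K'" for A' B :: "nat set" and K' r'
    proof (rule less.hyps)
      show "card A' < card A" "finite A'"
        using psubset_card_mono[OF that(2,1)] finite_subset[of A' B] that by auto
    qed (use that in auto)
    have "card (labelled_partitions l A K r)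
        = card (labelled_partitions l {1..Suc n} {2..Suc (card K)} r)"
      by (subst (1 2) card_labelled_partitions_recurrence)
        (use less.prems Suc smaller in \<open>auto cong: if_cong\<close>)
    then show ?thesis
      using Suc S_geq_eq_card_labelled_partitions by simp
  qed
qed

theorem mainTheorem8:
  fixes n k r l :: nat
  assumes "n \<ge> 1" and "k \<ge> 1" and "r \<ge> 1" and "l \<ge> 1"
  shows "S_geq l n k r =
    (\<Sum>i=l-1..n-1. (n-1 choose i) *
        ((k-1) * S_geq l (n-i-1) (k-1) r + S_geq l (n-i-1) k (r-1)))"
proof -
  have k: "Suc (k - 1) = k" "card {2..k} = k - 1"
    using assms(2) by auto
  have "S_geq l n k r = card (labelled_partitions l {1..n} {2..k} r)"
    using S_geq_eq_card_labelled_partitions[of l n "k - 1" r] k by simp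
  also have "\<dots> = (\<Sum>i=l-1..n-1. (n-1 choose i) * (card {2..k} * S_geq l (n-1-i) (card {2..k}) r
      + (if r = 0 then 0 else S_geq l (n-1-i) (Suc (card {2..k})) (r-1))))"
  proof (rule card_labelled_partitions_recurrence)
    show "card (labelled_partitions l A' K' r') = S_geq l (card A') (Suc (card K')) r'"
      if "A' \<subset> {1..n}" "finite K'" "1 \<notin> K'" for A' K' r'
    proof (rule card_labelled_partitions)
      show "finite A'"
        using that(1) by (meson finite_atLeastAtMost finite_subset psubset_imp_subset)
    qed (use that in auto)
  qed (use assms in auto)
  finally show ?thesis
    using assms(3) unfolding k by simp
qed

end
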